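(* Let $\mathcal{C}$ be a CD-category equipped with a normalisation structure $\mathrm{nrm}$ and with cancellative comparators $\nabla$. (i) If $\omega\colon I\to X$ is a state with full support, then $\mathrm{nrm}\big(\nabla_X\circ(\omega\otimes \mathrm{id}_X)\big)=\mathrm{id}_X$ as maps $X\to X$. (ii) More generally, if $c\colon X\to Y$ is a channel with full support, then $\mathrm{nrm}\big(\nabla_Y\circ(c\otimes \mathrm{id}_Y)\big)=\,!_X\otimes \mathrm{id}_Y$ as maps $X\otimes Y\to Y$.
   Context: A CD-category is a symmetric monoidal category (unit $I$) in which every object $X$ carries a copy map $\Delta_X\colon X\to X\otimes X$ and a discard map $!_X\colon X\to I$ forming a commutative comonoid, compatibly with $\otimes$. A map $f$ is a channel if $!\circ f=\,!$; a state is a map $I\to X$. The domain of $f\colon X\to Y$ is $\mathrm{dom}(f)=\,!_Y\circ f$; $g\colon X\to Y$ is a normalisation of $f$ if $f=(\mathrm{dom}(f)\otimes g)\circ\Delta_X$; $f$ is normalised if it is a normalisation of itself. A normalisation structure assigns to every $f\colon X\to Y$ a normalised map $\mathrm{nrm}(f)\colon X\to Y$ that is a normalisation of $f$, such that: $\mathrm{nrm}(f\otimes g)=\mathrm{nrm}(f)\otimes\mathrm{nrm}(g)$; $\mathrm{nrm}(h\circ f)=h\circ\mathrm{nrm}(f)$ for every channel $h$; discarders and copiers on inputs can be pulled out, i.e. $\mathrm{nrm}(f\circ(\mathrm{id}\otimes !))=\mathrm{nrm}(f)\circ(\mathrm{id}\otimes !)$ and $\mathrm{nrm}(f\circ\Delta)=\mathrm{nrm}(f)\circ\Delta$;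 and $\mathrm{nrm}(f)=f$ whenever $f$ is normalised. A comparator structure assigns to each $X$ a map $\nabla_X\colon X\otimes X\to X$ that is commutative, associative, compatible with $\otimes$, and satisfies the Frobenius/spider equations $\nabla\circ\Delta=\mathrm{id}$ and $(\nabla\otimes\mathrm{id})\circ(\mathrm{id}\otimes\Delta)=\Delta\circ\nabla=(\mathrm{id}\otimes\nabla)\circ(\Delta\otimes\mathrm{id})$. The cap is $\cap_X=\,!_X\circ\nabla_X\colon X\otimes X\to I$. Comparators are cancellative if for $f,g\colon A\to Y\otimes Z$, $(\cap_Y\otimes\mathrm{id}_Z)\circ(\mathrm{id}_Y\otimes f)=(\cap_Y\otimes\mathrm{id}_Z)\circ(\mathrm{id}_Y\otimes g)$ implies $f=g$. A map $f\colon X\to Y$ has full support if $\mathrm{nrm}\big(\cap_Y\circ(f\otimes\mathrm{id}_Y)\big)=\,!_{X\otimes Y}$ (a state is the case $X=I$). In the Kleisli category of the finite subdistribution monad (maps $X\to\mathcal{D}_{\le1}(Y)$, $\mathrm{nrm}$ = pointwise rescaling to total mass $1$, with the zero subdistribution sent to itself, $\nabla(x,x')=1|x\rangle$ if $x=x'$ and $0$ otherwise), full support of $f$ means $f(x)(y)>0$ for all $x,y$. *)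

theory Defs
  imports Main
begin

record ('o, 'm) cdcat =
  cArr   :: "'m \<Rightarrow> bool"
  cDom   :: "'m \<Rightarrow> 'o"
  cCod   :: "'m \<Rightarrow> 'o"
  cComp  :: "'m \<Rightarrow> 'm \<Rightarrow> 'm"          (* cComp g f = g \<circ> f *)
  cId    :: "'o \<Rightarrow> 'm"
  cTo    :: "'o \<Rightarrow> 'o \<Rightarrow> 'o"
  cTa    :: "'m \<Rightarrow> 'm \<Rightarrow> 'm"
  cUnit  :: "'o"
  cAssoc :: "'o \<Rightarrow> 'o \<Rightarrow> 'o \<Rightarrow> 'm"
  cLU    :: "'o \<Rightarrow> 'm"
  cRU    :: "'o \<Rightarrow> 'm"
  cSym   :: "'o \<Rightarrow> 'o \<Rightarrow> 'm"
  cCopy  :: "'o \<Rightarrow> 'm"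
  cDisc  :: "'o \<Rightarrow> 'm"

definition hom :: "('o, 'm, 'z) cdcat_scheme \<Rightarrow> 'o \<Rightarrow> 'o \<Rightarrow> 'm set" where
  "hom C X Y = {f. cArr C f \<and> cDom C f = X \<and> cCod C f = Y}"

definition is_iso :: "('o, 'm, 'z) cdcat_scheme \<Rightarrow> 'm \<Rightarrow> bool" where
  "is_iso C f \<longleftrightarrow> cArr C f \<and> (\<exists>g. g \<in> hom C (cCod C f) (cDom C f) \<and>
      cComp C g f = cId C (cDom C f) \<and> cComp C f g = cId C (cCod C f))"

definition inv_arr :: "('o, 'm, 'z) cdcat_scheme \<Rightarrow> 'm \<Rightarrow> 'm" where
  "inv_arr C f = (SOME g. g \<in> hom C (cCod C f) (cDom C f) \<and>
      cComp C g f = cId C (cDom C f) \<and> cComp C f g = cId C (cCod C f))"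

definition ainv :: "('o, 'm, 'z) cdcat_scheme \<Rightarrow> 'o \<Rightarrow> 'o \<Rightarrow> 'o \<Rightarrow> 'm" where
  "ainv C X Y Z = inv_arr C (cAssoc C X Y Z)"

text \<open>The middle-four interchange (X\<otimes>Y)\<otimes>(Z\<otimes>W) \<rightarrow> (X\<otimes>Z)\<otimes>(Y\<otimes>W).\<close>
definition shuffle :: "('o, 'm, 'z) cdcat_scheme \<Rightarrow> 'o \<Rightarrow> 'o \<Rightarrow> 'o \<Rightarrow> 'o \<Rightarrow> 'm" where
  "shuffle C X Y Z W =
     cComp C (ainv C X Z (cTo C Y W))
      (cComp C (cTa C (cId C X)
                  (cComp C (cAssoc C Z Y W)
                     (cComp C (cTa C (cSym C Y Z) (cId C W)) (ainv C Y Z W))))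
         (cAssoc C X Y (cTo C Z W)))"

locale cd_category =
  fixes C :: "('o, 'm, 'z) cdcat_scheme"
  assumes id_hom: "cId C X \<in> hom C X X"
    and comp_hom: "\<lbrakk>f \<in> hom C X Y; g \<in> hom C Y Z\<rbrakk> \<Longrightarrow> cComp C g f \<in> hom C X Z"
    and comp_idl: "f \<in> hom C X Y \<Longrightarrow> cComp C (cId C Y) f = f"
    and comp_idr: "f \<in> hom C X Y \<Longrightarrow> cComp C f (cId C X) = f"
    and comp_assoc: "\<lbrakk>f \<in> hom C X Y; g \<in> hom C Y Z; h \<in> hom C Z W\<rbrakk> \<Longrightarrow>
          cComp C h (cComp C g f) = cComp C (cComp C h g) f"
    and tensor_hom: "\<lbrakk>f \<in> hom C X Y; g \<in> hom C X' Y'\<rbrakk> \<Longrightarrow>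
          cTa C f g \<in> hom C (cTo C X X') (cTo C Y Y')"
    and tensor_id: "cTa C (cId C X) (cId C Y) = cId C (cTo C X Y)"
    and interchange: "\<lbrakk>f \<in> hom C X Y; g \<in> hom C Y Z; f' \<in> hom C X' Y'; g' \<in> hom C Y' Z'\<rbrakk> \<Longrightarrow>
          cTa C (cComp C g f) (cComp C g' f') = cComp C (cTa C g g') (cTa C f f')"
    and assoc_hom: "cAssoc C X Y Z \<in> hom C (cTo C (cTo C X Y) Z) (cTo C X (cTo C Y Z))"
    and lu_hom: "cLU C X \<in> hom C (cTo C (cUnit C) X) X"
    and ru_hom: "cRU C X \<in> hom C (cTo C X (cUnit C)) X"
    and sym_hom: "cSym C X Y \<in> hom C (cTo C X Y) (cTo C Y X)"
    and assoc_iso: "is_iso C (cAssoc C X Y Z)"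
    and lu_iso: "is_iso C (cLU C X)"
    and ru_iso: "is_iso C (cRU C X)"
    and assoc_nat: "\<lbrakk>f \<in> hom C X X'; g \<in> hom C Y Y'; h \<in> hom C Z Z'\<rbrakk> \<Longrightarrow>
          cComp C (cAssoc C X' Y' Z') (cTa C (cTa C f g) h)
          = cComp C (cTa C f (cTa C g h)) (cAssoc C X Y Z)"
    and lu_nat: "f \<in> hom C X Y \<Longrightarrow>
          cComp C (cLU C Y) (cTa C (cId C (cUnit C)) f) = cComp C f (cLU C X)"
    and ru_nat: "f \<in> hom C X Y \<Longrightarrow>
          cComp C (cRU C Y) (cTa C f (cId C (cUnit C))) = cComp C f (cRU C X)"
    and sym_nat: "\<lbrakk>f \<in> hom C X X'; g \<in> hom C Y Y'\<rbrakk> \<Longrightarrow>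
          cComp C (cSym C X' Y') (cTa C f g) = cComp C (cTa C g f) (cSym C X Y)"
    and pentagon: "cComp C (cAssoc C W X (cTo C Y Z)) (cAssoc C (cTo C W X) Y Z)
          = cComp C (cTa C (cId C W) (cAssoc C X Y Z))
              (cComp C (cAssoc C W (cTo C X Y) Z) (cTa C (cAssoc C W X Y) (cId C Z)))"
    and triangle: "cComp C (cTa C (cId C X) (cLU C Y)) (cAssoc C X (cUnit C) Y)
          = cTa C (cRU C X) (cId C Y)"
    and sym_inv: "cComp C (cSym C Y X) (cSym C X Y) = cId C (cTo C X Y)"
    and hexagon: "cComp C (cAssoc C Y Z X) (cComp C (cSym C X (cTo C Y Z)) (cAssoc C X Y Z))
          = cComp C (cTa C (cId C Y) (cSym C X Z))
              (cComp C (cAssoc C Y X Z) (cTa C (cSym C X Y) (cId C Z)))"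
    and copy_hom: "cCopy C X \<in> hom C X (cTo C X X)"
    and disc_hom: "cDisc C X \<in> hom C X (cUnit C)"
    and counit: "cComp C (cLU C X) (cComp C (cTa C (cDisc C X) (cId C X)) (cCopy C X)) = cId C X"
    and coassoc: "cComp C (cAssoc C X X X) (cComp C (cTa C (cCopy C X) (cId C X)) (cCopy C X))
          = cComp C (cTa C (cId C X) (cCopy C X)) (cCopy C X)"
    and cocomm: "cComp C (cSym C X X) (cCopy C X) = cCopy C X"
    and copy_tensor: "cCopy C (cTo C X Y) = cComp C (shuffle C X X Y Y) (cTa C (cCopy C X) (cCopy C Y))"
    and disc_tensor: "cDisc C (cTo C X Y) = cComp C (cLU C (cUnit C)) (cTa C (cDisc C X) (cDisc C Y))"
    and copy_unit: "cCopy C (cUnit C) = inv_arr C (cLU C (cUnit C))"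
    and disc_unit: "cDisc C (cUnit C) = cId C (cUnit C)"

definition channel :: "('o, 'm, 'z) cdcat_scheme \<Rightarrow> 'm \<Rightarrow> bool" where
  "channel C f \<longleftrightarrow> cArr C f \<and> cComp C (cDisc C (cCod C f)) f = cDisc C (cDom C f)"

definition dmn :: "('o, 'm, 'z) cdcat_scheme \<Rightarrow> 'm \<Rightarrow> 'm" where
  "dmn C f = cComp C (cDisc C (cCod C f)) f"

definition is_normalisation :: "('o, 'm, 'z) cdcat_scheme \<Rightarrow> 'm \<Rightarrow> 'm \<Rightarrow> bool" where
  "is_normalisation C f g \<longleftrightarrow> cArr C f \<and> g \<in> hom C (cDom C f) (cCod C f) \<and>
     f = cComp C (cLU C (cCod C f)) (cComp C (cTa C (dmn C f) g) (cCopy C (cDom C f)))"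

definition normalised :: "('o, 'm, 'z) cdcat_scheme \<Rightarrow> 'm \<Rightarrow> bool" where
  "normalised C f \<longleftrightarrow> is_normalisation C f f"

definition normalisation_structure ::
  "('o, 'm, 'z) cdcat_scheme \<Rightarrow> ('m \<Rightarrow> 'm) \<Rightarrow> bool" where
  "normalisation_structure C nrm \<longleftrightarrow>
     (\<forall>f. cArr C f \<longrightarrow> normalised C (nrm f) \<and> is_normalisation C f (nrm f)) \<and>
     (\<forall>f g. cArr C f \<and> cArr C g \<longrightarrow> nrm (cTa C f g) = cTa C (nrm f) (nrm g)) \<and>
     (\<forall>f h X Y Z. f \<in> hom C X Y \<and> h \<in> hom C Y Z \<and> channel C h \<longrightarrow>
        nrm (cComp C h f) = cComp C h (nrm f)) \<and>
     (\<forall>f X Y Z. f \<in> hom C X Y \<longrightarrow>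
        nrm (cComp C f (cComp C (cRU C X) (cTa C (cId C X) (cDisc C Z))))
        = cComp C (nrm f) (cComp C (cRU C X) (cTa C (cId C X) (cDisc C Z)))) \<and>
     (\<forall>f X Y. f \<in> hom C (cTo C X X) Y \<longrightarrow>
        nrm (cComp C f (cCopy C X)) = cComp C (nrm f) (cCopy C X)) \<and>
     (\<forall>f. cArr C f \<and> normalised C f \<longrightarrow> nrm f = f)"

definition comparator_structure ::
  "('o, 'm, 'z) cdcat_scheme \<Rightarrow> ('o \<Rightarrow> 'm) \<Rightarrow> bool" where
  "comparator_structure C cmp \<longleftrightarrow>
     (\<forall>X. cmp X \<in> hom C (cTo C X X) X) \<and>
     (\<forall>X. cComp C (cmp X) (cSym C X X) = cmp X) \<and>
     (\<forall>X. cComp C (cmp X) (cTa C (cmp X) (cId C X))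
          = cComp C (cmp X) (cComp C (cTa C (cId C X) (cmp X)) (cAssoc C X X X))) \<and>
     (\<forall>X Y. cmp (cTo C X Y) = cComp C (cTa C (cmp X) (cmp Y)) (shuffle C X Y X Y)) \<and>
     cmp (cUnit C) = cLU C (cUnit C) \<and>
     (\<forall>X. cComp C (cmp X) (cCopy C X) = cId C X) \<and>
     (\<forall>X. cComp C (cTa C (cmp X) (cId C X)) (cComp C (ainv C X X X) (cTa C (cId C X) (cCopy C X)))
          = cComp C (cCopy C X) (cmp X)) \<and>
     (\<forall>X. cComp C (cCopy C X) (cmp X)
          = cComp C (cTa C (cId C X) (cmp X)) (cComp C (cAssoc C X X X) (cTa C (cCopy C X) (cId C X))))"

definition cap :: "('o, 'm, 'z) cdcat_scheme \<Rightarrow> ('o \<Rightarrow> 'm) \<Rightarrow> 'o \<Rightarrow> 'm" where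
  "cap C cmp X = cComp C (cDisc C X) (cmp X)"

definition cap_apply :: "('o, 'm, 'z) cdcat_scheme \<Rightarrow> ('o \<Rightarrow> 'm) \<Rightarrow> 'o \<Rightarrow> 'o \<Rightarrow> 'm \<Rightarrow> 'm" where
  "cap_apply C cmp Y Z f = cComp C (cLU C Z) (cComp C (cTa C (cap C cmp Y) (cId C Z))
       (cComp C (ainv C Y Y Z) (cTa C (cId C Y) f)))"

definition cancellative :: "('o, 'm, 'z) cdcat_scheme \<Rightarrow> ('o \<Rightarrow> 'm) \<Rightarrow> bool" where
  "cancellative C cmp \<longleftrightarrow>
     (\<forall>A Y Z f g. f \<in> hom C A (cTo C Y Z) \<and> g \<in> hom C A (cTo C Y Z) \<and>
        cap_apply C cmp Y Z f = cap_apply C cmp Y Z g \<longrightarrow> f = g)"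

definition full_support ::
  "('o, 'm, 'z) cdcat_scheme \<Rightarrow> ('m \<Rightarrow> 'm) \<Rightarrow> ('o \<Rightarrow> 'm) \<Rightarrow> 'm \<Rightarrow> bool" where
  "full_support C nrm cmp f \<longleftrightarrow>
     nrm (cComp C (cap C cmp (cCod C f)) (cTa C f (cId C (cCod C f))))
     = cDisc C (cTo C (cDom C f) (cCod C f))"

end

(*
  Write g = cmp Y o (f (x) id Y) : X (x) Y -> Y.  The Frobenius law of the comparator says that
  copying the output of g is the same as copying its second input and feeding one copy through g.
  Together with the counit law this factors g as (dom g (x) pi) o copy, where pi = !_X (x) id_Y is
  the second projection; so pi is a normalisation of g, and it is normalised because it is a
  channel.  Normalisation commutes with this factorisation, turning it into
  nrm g = (nrm (dom g) (x) pi) o copy, and full support of f says exactly nrm (dom g) = !.  By the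
  counit law again, nrm g = pi.  The state case is X = I.
*)

theory Submission
  imports Defs
begin

context cd_category
begin

abbreviation arr where "arr \<equiv> cArr C"
abbreviation dom where "dom \<equiv> cDom C"
abbreviation cod where "cod \<equiv> cCod C"
abbreviation id where "id \<equiv> cId C"
abbreviation comp (infixr "\<cdot>" 55) where "g \<cdot> f \<equiv> cComp C g f"
abbreviation tensor (infixr "\<otimes>" 60) where "f \<otimes> g \<equiv> cTa C f g"
abbreviation tensor_ob (infixr "\<otimes>\<^sub>o" 60) where "X \<otimes>\<^sub>o Y \<equiv> cTo C X Y"
abbreviation tensor_unit ("\<I>") where "\<I> \<equiv> cUnit C"
abbreviation assoc where "assoc \<equiv> cAssoc C"
abbreviation assoc' where "assoc' \<equiv> ainv C"
abbreviation lunit where "lunit \<equiv> cLU C"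
abbreviation lunit' where "lunit' X \<equiv> inv_arr C (cLU C X)"
abbreviation runit where "runit \<equiv> cRU C"
abbreviation runit' where "runit' X \<equiv> inv_arr C (cRU C X)"
abbreviation sym where "sym \<equiv> cSym C"
abbreviation copy where "copy \<equiv> cCopy C"
abbreviation disc where "disc \<equiv> cDisc C"
abbreviation proj2 where "proj2 X Y \<equiv> lunit Y \<cdot> (disc X \<otimes> id Y)"

lemma homI: "arr f \<Longrightarrow> f \<in> hom C (dom f) (cod f)"
  by (simp add: hom_def)

lemma is_iso_inv_arr:
  assumes "is_iso C f"
  shows "arr (inv_arr C f)" "dom (inv_arr C f) = cod f" "cod (inv_arr C f) = dom f"
    and "inv_arr C f \<cdot> f = id (dom f)" "f \<cdot> inv_arr C f = id (cod f)"
proof -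
  have "\<exists>g. g \<in> hom C (cod f) (dom f) \<and> g \<cdot> f = id (dom f) \<and> f \<cdot> g = id (cod f)"
    using assms by (simp add: is_iso_def)
  from someI_ex[OF this] show "arr (inv_arr C f)" "dom (inv_arr C f) = cod f"
      "cod (inv_arr C f) = dom f" "inv_arr C f \<cdot> f = id (dom f)" "f \<cdot> inv_arr C f = id (cod f)"
    unfolding inv_arr_def hom_def by blast+
qed

lemma id_typing [simp]: "arr (id X)" "dom (id X) = X" "cod (id X) = X"
  using id_hom[of X] by (auto simp: hom_def)

lemma assoc_typing [simp]:
  "arr (assoc X Y Z)" "dom (assoc X Y Z) = (X \<otimes>\<^sub>o Y) \<otimes>\<^sub>o Z" "cod (assoc X Y Z) = X \<otimes>\<^sub>o Y \<otimes>\<^sub>o Z"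
  using assoc_hom[of X Y Z] by (auto simp: hom_def)

lemma lunit_typing [simp]: "arr (lunit X)" "dom (lunit X) = \<I> \<otimes>\<^sub>o X" "cod (lunit X) = X"
  using lu_hom[of X] by (auto simp: hom_def)

lemma runit_typing [simp]: "arr (runit X)" "dom (runit X) = X \<otimes>\<^sub>o \<I>" "cod (runit X) = X"
  using ru_hom[of X] by (auto simp: hom_def)

lemma sym_typing [simp]: "arr (sym X Y)" "dom (sym X Y) = X \<otimes>\<^sub>o Y" "cod (sym X Y) = Y \<otimes>\<^sub>o X"
  using sym_hom[of X Y] by (auto simp: hom_def)

lemma copy_typing [simp]: "arr (copy X)" "dom (copy X) = X" "cod (copy X) = X \<otimes>\<^sub>o X"
  using copy_hom[of X] by (auto simp: hom_def)

lemma disc_typing [simp]: "arr (disc X)" "dom (disc X) = X" "cod (disc X) = \<I>"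
  using disc_hom[of X] by (auto simp: hom_def)

lemma assoc'_typing [simp]:
  "arr (assoc' X Y Z)" "dom (assoc' X Y Z) = X \<otimes>\<^sub>o Y \<otimes>\<^sub>o Z" "cod (assoc' X Y Z) = (X \<otimes>\<^sub>o Y) \<otimes>\<^sub>o Z"
  and assoc'_assoc: "assoc' X Y Z \<cdot> assoc X Y Z = id ((X \<otimes>\<^sub>o Y) \<otimes>\<^sub>o Z)"
  and assoc_assoc': "assoc X Y Z \<cdot> assoc' X Y Z = id (X \<otimes>\<^sub>o Y \<otimes>\<^sub>o Z)"
  using is_iso_inv_arr[OF assoc_iso[of X Y Z]] by (auto simp: ainv_def)

lemma lunit'_typing [simp]: "arr (lunit' X)" "dom (lunit' X) = X" "cod (lunit' X) = \<I> \<otimes>\<^sub>o X"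
  and lunit_lunit': "lunit X \<cdot> lunit' X = id X"
  using is_iso_inv_arr[OF lu_iso[of X]] by auto

lemma runit'_typing [simp]: "arr (runit' X)" "dom (runit' X) = X" "cod (runit' X) = X \<otimes>\<^sub>o \<I>"
  and runit_runit': "runit X \<cdot> runit' X = id X"
  using is_iso_inv_arr[OF ru_iso[of X]] by auto

lemma comp_typing [simp]:
  assumes "arr f" "arr g" "dom g = cod f"
  shows "arr (g \<cdot> f)" "dom (g \<cdot> f) = dom f" "cod (g \<cdot> f) = cod g"
  using comp_hom[OF homI[OF assms(1)], of g "cod g"] homI[OF assms(2)] assms(3)
  by (auto simp: hom_def)

lemma tensor_typing [simp]:
  assumes "arr f" "arr g"
  shows "arr (f \<otimes> g)" "dom (f \<otimes> g) = dom f \<otimes>\<^sub>o dom g" "cod (f \<otimes> g) = cod f \<otimes>\<^sub>o cod g"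
  using tensor_hom[OF homI[OF assms(1)] homI[OF assms(2)]] by (auto simp: hom_def)

lemma comp_assoc_right [simp]:
  "\<lbrakk>arr f; arr g; arr h; dom g = cod f; dom h = cod g\<rbrakk> \<Longrightarrow> (h \<cdot> g) \<cdot> f = h \<cdot> g \<cdot> f"
  using comp_assoc[of f "dom f" "cod f" g "cod g" h "cod h"] by (simp add: hom_def)

lemma comp_id_left [simp]: "\<lbrakk>arr f; cod f = X\<rbrakk> \<Longrightarrow> id X \<cdot> f = f"
  using comp_idl[OF homI, of f] by simp

lemma comp_id_right [simp]: "\<lbrakk>arr f; dom f = X\<rbrakk> \<Longrightarrow> f \<cdot> id X = f"
  using comp_idr[OF homI, of f] by simp

declare tensor_id [simp]

lemma comp_eq_precomp:
  "\<lbrakk>a \<cdot> b = c; arr a; arr b; arr k; dom a = cod b; dom b = cod k\<rbrakk> \<Longrightarrow> a \<cdot> b \<cdot> k = c \<cdot> k"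
  by (metis comp_assoc_right)

lemma tensor_comp:
  "\<lbrakk>arr f; arr g; arr f'; arr g'; dom g = cod f; dom g' = cod f'\<rbrakk> \<Longrightarrow>
     (g \<cdot> f) \<otimes> (g' \<cdot> f') = (g \<otimes> g') \<cdot> (f \<otimes> f')"
  using interchange[of f "dom f" "cod f" g "cod g" f' "dom f'" "cod f'" g' "cod g'"]
  by (simp add: hom_def)

lemma id_tensor_comp:
  "\<lbrakk>arr f; arr g; dom g = cod f\<rbrakk> \<Longrightarrow> id X \<otimes> (g \<cdot> f) = (id X \<otimes> g) \<cdot> (id X \<otimes> f)"
  using tensor_comp[of "id X" "id X" f g] by simp

lemma comp_tensor_id:
  "\<lbrakk>arr f; arr g; dom g = cod f\<rbrakk> \<Longrightarrow> (g \<cdot> f) \<otimes> id X = (g \<otimes> id X) \<cdot> (f \<otimes> id X)"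
  using tensor_comp[of f g "id X" "id X"] by simp

lemma lunit_naturality: "arr f \<Longrightarrow> lunit (cod f) \<cdot> (id \<I> \<otimes> f) = f \<cdot> lunit (dom f)"
  using lu_nat[OF homI] by simp

lemma runit_naturality: "arr f \<Longrightarrow> runit (cod f) \<cdot> (f \<otimes> id \<I>) = f \<cdot> runit (dom f)"
  using ru_nat[OF homI] by simp

lemma sym_naturality:
  "\<lbrakk>arr f; arr g\<rbrakk> \<Longrightarrow> sym (cod f) (cod g) \<cdot> (f \<otimes> g) = (g \<otimes> f) \<cdot> sym (dom f) (dom g)"
  using sym_nat[OF homI homI] by simp

lemma assoc_naturality:
  "\<lbrakk>arr f; arr g; arr h\<rbrakk> \<Longrightarrow>
     assoc (cod f) (cod g) (cod h) \<cdot> ((f \<otimes> g) \<otimes> h) = (f \<otimes> g \<otimes> h) \<cdot> assoc (dom f) (dom g) (dom h)"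
  using assoc_nat[OF homI homI homI] by simp

lemma assoc'_naturality:
  assumes "arr f" "arr g" "arr h"
  shows "assoc' (cod f) (cod g) (cod h) \<cdot> (f \<otimes> g \<otimes> h) = ((f \<otimes> g) \<otimes> h) \<cdot> assoc' (dom f) (dom g) (dom h)"
proof -
  let ?X = "dom f" and ?Y = "dom g" and ?Z = "dom h"
    and ?X' = "cod f" and ?Y' = "cod g" and ?Z' = "cod h"
  have "assoc' ?X' ?Y' ?Z' \<cdot> (f \<otimes> g \<otimes> h)
      = assoc' ?X' ?Y' ?Z' \<cdot> (f \<otimes> g \<otimes> h) \<cdot> assoc ?X ?Y ?Z \<cdot> assoc' ?X ?Y ?Z"
    using assms by (simp add: assoc_assoc')
  also have "\<dots> = assoc' ?X' ?Y' ?Z' \<cdot> assoc ?X' ?Y' ?Z' \<cdot> ((f \<otimes> g) \<otimes> h) \<cdot> assoc' ?X ?Y ?Z"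
    using assms by (simp add: comp_eq_precomp[OF assoc_naturality[symmetric]])
  also have "\<dots> = ((f \<otimes> g) \<otimes> h) \<cdot> assoc' ?X ?Y ?Z"
    using assms by (simp add: comp_eq_precomp[OF assoc'_assoc])
  finally show ?thesis .
qed

lemma split_epi_cancel_right:
  assumes "a \<cdot> s = b \<cdot> s" and "s \<cdot> t = id X"
    and "arr a" "arr b" "arr s" "arr t" "cod s = X" "dom a = X" "dom b = X" "cod t = dom s"
  shows "a = b"
proof -
  have "a = (a \<cdot> s) \<cdot> t" and "b = (b \<cdot> s) \<cdot> t"
    using assms(2-) by simp_all
  with assms(1) show ?thesis
    by simp
qed

lemma id_unit_tensor_cancel:
  assumes "arr a" "arr b" "dom a = dom b" "cod a = cod b" "id \<I> \<otimes> a = id \<I> \<otimes> b"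
  shows "a = b"
proof (rule split_epi_cancel_right[OF _ lunit_lunit'])
  show "a \<cdot> lunit (dom a) = b \<cdot> lunit (dom a)"
    using assms lunit_naturality[of a] lunit_naturality[of b] by simp
qed (use assms in simp_all)

lemma tensor_id_unit_cancel:
  assumes "arr a" "arr b" "dom a = dom b" "cod a = cod b" "a \<otimes> id \<I> = b \<otimes> id \<I>"
  shows "a = b"
proof (rule split_epi_cancel_right[OF _ runit_runit'])
  show "a \<cdot> runit (dom a) = b \<cdot> runit (dom a)"
    using assms runit_naturality[of a] runit_naturality[of b] by simp
qed (use assms in simp_all)

(* Kelly's argument: after whiskering with I on the left, the pentagon and the triangle identity
   make both sides agree up to the isomorphism ?P. *)
lemma lunit_tensor: "lunit (Y \<otimes>\<^sub>o Z) \<cdot> assoc \<I> Y Z = lunit Y \<otimes> id Z"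
proof -
  let ?P = "assoc \<I> (\<I> \<otimes>\<^sub>o Y) Z \<cdot> (assoc \<I> \<I> Y \<otimes> id Z)"
  let ?P' = "(assoc' \<I> \<I> Y \<otimes> id Z) \<cdot> assoc' \<I> (\<I> \<otimes>\<^sub>o Y) Z"
  have P_P': "?P \<cdot> ?P' = id (\<I> \<otimes>\<^sub>o (\<I> \<otimes>\<^sub>o Y) \<otimes>\<^sub>o Z)"
  proof -
    have "(assoc \<I> \<I> Y \<otimes> id Z) \<cdot> (assoc' \<I> \<I> Y \<otimes> id Z) = id ((\<I> \<otimes>\<^sub>o \<I> \<otimes>\<^sub>o Y) \<otimes>\<^sub>o Z)"
      using tensor_comp[of "assoc' \<I> \<I> Y" "assoc \<I> \<I> Y" "id Z" "id Z"] by (simp add: assoc_assoc')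
    from comp_eq_precomp[OF this, of "assoc' \<I> (\<I> \<otimes>\<^sub>o Y) Z"] show ?thesis
      by (simp add: assoc_assoc')
  qed
  have "(id \<I> \<otimes> (lunit (Y \<otimes>\<^sub>o Z) \<cdot> assoc \<I> Y Z)) \<cdot> ?P
      = (id \<I> \<otimes> lunit (Y \<otimes>\<^sub>o Z)) \<cdot> (id \<I> \<otimes> assoc \<I> Y Z) \<cdot> ?P"
    by (simp add: id_tensor_comp)
  also have "\<dots> = (id \<I> \<otimes> lunit (Y \<otimes>\<^sub>o Z)) \<cdot> assoc \<I> \<I> (Y \<otimes>\<^sub>o Z) \<cdot> assoc (\<I> \<otimes>\<^sub>o \<I>) Y Z"
    using pentagon[of \<I> \<I> Y Z] by simp
  also have "\<dots> = (runit \<I> \<otimes> id (Y \<otimes>\<^sub>o Z)) \<cdot> assoc (\<I> \<otimes>\<^sub>o \<I>) Y Z"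
    by (simp add: comp_eq_precomp[OF triangle])
  also have "\<dots> = assoc \<I> Y Z \<cdot> ((runit \<I> \<otimes> id Y) \<otimes> id Z)"
    using assoc_naturality[of "runit \<I>" "id Y" "id Z"] by simp
  also have "\<dots> = assoc \<I> Y Z \<cdot> ((id \<I> \<otimes> lunit Y) \<otimes> id Z) \<cdot> (assoc \<I> \<I> Y \<otimes> id Z)"
    by (simp add: triangle[symmetric] comp_tensor_id)
  also have "\<dots> = (id \<I> \<otimes> lunit Y \<otimes> id Z) \<cdot> ?P"
    using comp_eq_precomp[OF assoc_naturality[of "id \<I>" "lunit Y" "id Z"], of "assoc \<I> \<I> Y \<otimes> id Z"]
    by simp
  finally have "(id \<I> \<otimes> (lunit (Y \<otimes>\<^sub>o Z) \<cdot> assoc \<I> Y Z)) \<cdot> ?P = (id \<I> \<otimes> lunit Y \<otimes> id Z) \<cdot> ?P" .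
  then have "id \<I> \<otimes> (lunit (Y \<otimes>\<^sub>o Z) \<cdot> assoc \<I> Y Z) = id \<I> \<otimes> lunit Y \<otimes> id Z"
    by (rule split_epi_cancel_right[OF _ P_P']) simp_all
  then show ?thesis
    by (rule id_unit_tensor_cancel[rotated 4]) simp_all
qed

lemma runit_sym: "runit Y \<cdot> sym \<I> Y = lunit Y"
proof -
  have "sym Y \<I> \<cdot> (runit Y \<otimes> id \<I>) = sym Y \<I> \<cdot> (id Y \<otimes> lunit \<I>) \<cdot> assoc Y \<I> \<I>"
    by (simp add: triangle)
  also have "\<dots> = (lunit \<I> \<otimes> id Y) \<cdot> sym Y (\<I> \<otimes>\<^sub>o \<I>) \<cdot> assoc Y \<I> \<I>"
    using comp_eq_precomp[OF sym_naturality[of "id Y" "lunit \<I>"], of "assoc Y \<I> \<I>"] by simp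
  also have "\<dots> = lunit (\<I> \<otimes>\<^sub>o Y) \<cdot> assoc \<I> \<I> Y \<cdot> sym Y (\<I> \<otimes>\<^sub>o \<I>) \<cdot> assoc Y \<I> \<I>"
    by (simp add: comp_eq_precomp[OF lunit_tensor])
  also have "\<dots> = lunit (\<I> \<otimes>\<^sub>o Y) \<cdot> (id \<I> \<otimes> sym Y \<I>) \<cdot> assoc \<I> Y \<I> \<cdot> (sym Y \<I> \<otimes> id \<I>)"
    using hexagon[of \<I> \<I> Y] by simp
  also have "\<dots> = sym Y \<I> \<cdot> lunit (Y \<otimes>\<^sub>o \<I>) \<cdot> assoc \<I> Y \<I> \<cdot> (sym Y \<I> \<otimes> id \<I>)"
    using comp_eq_precomp[OF lunit_naturality[of "sym Y \<I>"], of "assoc \<I> Y \<I> \<cdot> (sym Y \<I> \<otimes> id \<I>)"]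
    by simp
  also have "\<dots> = sym Y \<I> \<cdot> ((lunit Y \<cdot> sym Y \<I>) \<otimes> id \<I>)"
    by (simp add: comp_eq_precomp[OF lunit_tensor] comp_tensor_id)
  finally have "sym \<I> Y \<cdot> sym Y \<I> \<cdot> (runit Y \<otimes> id \<I>) = sym \<I> Y \<cdot> sym Y \<I> \<cdot> ((lunit Y \<cdot> sym Y \<I>) \<otimes> id \<I>)"
    by simp
  then have "runit Y \<otimes> id \<I> = (lunit Y \<cdot> sym Y \<I>) \<otimes> id \<I>"
    by (simp add: comp_eq_precomp[OF sym_inv])
  then have "runit Y = lunit Y \<cdot> sym Y \<I>"
    by (rule tensor_id_unit_cancel[rotated 4]) simp_all
  then show ?thesis
    by (simp add: sym_inv)
qed

lemma runit_disc_sym: "runit Y \<cdot> (id Y \<otimes> disc X) \<cdot> sym X Y = proj2 X Y"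
  using sym_naturality[of "disc X" "id Y"] comp_eq_precomp[OF runit_sym[of Y], of "disc X \<otimes> id Y"]
  by simp

lemma counit_right: "runit X \<cdot> (id X \<otimes> disc X) \<cdot> copy X = id X"
proof -
  have "runit X \<cdot> (id X \<otimes> disc X) \<cdot> copy X = runit X \<cdot> (id X \<otimes> disc X) \<cdot> sym X X \<cdot> copy X"
    using cocomm[of X] by simp
  also have "\<dots> = id X"
    using comp_eq_precomp[OF runit_disc_sym[of X X], of "copy X"] counit[of X] by simp
  finally show ?thesis .
qed

lemma id_tensor_proj2_assoc:
  "(id A \<otimes> proj2 X W) \<cdot> assoc A X W = (runit A \<cdot> (id A \<otimes> disc X)) \<otimes> id W"
proof -
  have "(id A \<otimes> proj2 X W) \<cdot> assoc A X W = (id A \<otimes> lunit W) \<cdot> (id A \<otimes> disc X \<otimes> id W) \<cdot> assoc A X W"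
    by (simp add: id_tensor_comp)
  also have "\<dots> = (id A \<otimes> lunit W) \<cdot> assoc A \<I> W \<cdot> ((id A \<otimes> disc X) \<otimes> id W)"
    using assoc_naturality[of "id A" "disc X" "id W"] by simp
  also have "\<dots> = (runit A \<cdot> (id A \<otimes> disc X)) \<otimes> id W"
    by (simp add: comp_eq_precomp[OF triangle] comp_tensor_id)
  finally show ?thesis .
qed

lemma proj2_tensor_id_assoc': "(proj2 X Y \<otimes> id Z) \<cdot> assoc' X Y Z = proj2 X (Y \<otimes>\<^sub>o Z)"
proof -
  have lunit_tensor': "(lunit Y \<otimes> id Z) \<cdot> assoc' \<I> Y Z = lunit (Y \<otimes>\<^sub>o Z)"
    using comp_eq_precomp[OF lunit_tensor[of Y Z], of "assoc' \<I> Y Z"] by (simp add: assoc_assoc')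
  have "(proj2 X Y \<otimes> id Z) \<cdot> assoc' X Y Z = (lunit Y \<otimes> id Z) \<cdot> ((disc X \<otimes> id Y) \<otimes> id Z) \<cdot> assoc' X Y Z"
    by (simp add: comp_tensor_id)
  also have "\<dots> = (lunit Y \<otimes> id Z) \<cdot> assoc' \<I> Y Z \<cdot> (disc X \<otimes> id (Y \<otimes>\<^sub>o Z))"
    using assoc'_naturality[of "disc X" "id Y" "id Z"] by simp
  also have "\<dots> = proj2 X (Y \<otimes>\<^sub>o Z)"
    by (simp add: comp_eq_precomp[OF lunit_tensor'])
  finally show ?thesis .
qed

lemma copy_tensor_proj2:
  "(id (X \<otimes>\<^sub>o Y) \<otimes> proj2 X Y) \<cdot> copy (X \<otimes>\<^sub>o Y) = assoc' X Y Y \<cdot> (id X \<otimes> copy Y)"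
proof -
  let ?p = "proj2 X Y"
  let ?T = "assoc Y X Y \<cdot> (sym X Y \<otimes> id Y) \<cdot> assoc' X Y Y"
  have T: "(id Y \<otimes> ?p) \<cdot> ?T = proj2 X (Y \<otimes>\<^sub>o Y)"
  proof -
    have "(id Y \<otimes> ?p) \<cdot> ?T = ((runit Y \<cdot> (id Y \<otimes> disc X)) \<otimes> id Y) \<cdot> (sym X Y \<otimes> id Y) \<cdot> assoc' X Y Y"
      by (simp add: comp_eq_precomp[OF id_tensor_proj2_assoc])
    also have "\<dots> = (?p \<otimes> id Y) \<cdot> assoc' X Y Y"
    proof -
      have "?p \<otimes> id Y = ((runit Y \<cdot> (id Y \<otimes> disc X)) \<otimes> id Y) \<cdot> (sym X Y \<otimes> id Y)"
        using comp_tensor_id[of "sym X Y" "runit Y \<cdot> (id Y \<otimes> disc X)" Y]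
        by (simp add: runit_disc_sym)
      from comp_eq_precomp[OF this[symmetric], of "assoc' X Y Y"] show ?thesis
        by simp
    qed
    also have "\<dots> = proj2 X (Y \<otimes>\<^sub>o Y)"
      by (rule proj2_tensor_id_assoc')
    finally show ?thesis .
  qed
  have "(id (X \<otimes>\<^sub>o Y) \<otimes> ?p) \<cdot> copy (X \<otimes>\<^sub>o Y)
      = (id (X \<otimes>\<^sub>o Y) \<otimes> ?p) \<cdot> assoc' X Y (X \<otimes>\<^sub>o Y) \<cdot> (id X \<otimes> ?T) \<cdot> assoc X X (Y \<otimes>\<^sub>o Y) \<cdot> (copy X \<otimes> copy Y)"
    by (simp add: copy_tensor shuffle_def)
  also have "\<dots> = assoc' X Y Y \<cdot> (id X \<otimes> id Y \<otimes> ?p) \<cdot> (id X \<otimes> ?T) \<cdot> assoc X X (Y \<otimes>\<^sub>o Y) \<cdot> (copy X \<otimes> copy Y)"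
    using comp_eq_precomp[OF assoc'_naturality[of "id X" "id Y" ?p, symmetric],
        of "(id X \<otimes> ?T) \<cdot> assoc X X (Y \<otimes>\<^sub>o Y) \<cdot> (copy X \<otimes> copy Y)"]
    by simp
  also have "\<dots> = assoc' X Y Y \<cdot> (id X \<otimes> ((id Y \<otimes> ?p) \<cdot> ?T)) \<cdot> assoc X X (Y \<otimes>\<^sub>o Y) \<cdot> (copy X \<otimes> copy Y)"
    using comp_eq_precomp[OF id_tensor_comp[of ?T "id Y \<otimes> ?p" X, symmetric],
        of "assoc X X (Y \<otimes>\<^sub>o Y) \<cdot> (copy X \<otimes> copy Y)"]
    by simp
  also have "\<dots> = assoc' X Y Y \<cdot> ((runit X \<cdot> (id X \<otimes> disc X)) \<otimes> id (Y \<otimes>\<^sub>o Y)) \<cdot> (copy X \<otimes> copy Y)"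
    by (simp only: T) (simp add: comp_eq_precomp[OF id_tensor_proj2_assoc])
  also have "\<dots> = assoc' X Y Y \<cdot> (id X \<otimes> copy Y)"
    using tensor_comp[of "copy X" "runit X \<cdot> (id X \<otimes> disc X)" "copy Y" "id (Y \<otimes>\<^sub>o Y)"]
    by (simp add: counit_right)
  finally show ?thesis .
qed

lemma lunit_disc_tensor_copy:
  assumes "arr h"
  shows "lunit (cod h) \<cdot> (disc (dom h) \<otimes> h) \<cdot> copy (dom h) = h"
proof -
  have "disc (dom h) \<otimes> h = (id \<I> \<otimes> h) \<cdot> (disc (dom h) \<otimes> id (dom h))"
    using assms tensor_comp[of "disc (dom h)" "id \<I>" "id (dom h)" h] by simp
  then show ?thesis
    using assms comp_eq_precomp[OF lunit_naturality[of h], of "(disc (dom h) \<otimes> id (dom h)) \<cdot> copy (dom h)"]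
    by (simp add: counit)
qed

lemma channel_normalised: "channel C h \<Longrightarrow> normalised C h"
  using lunit_disc_tensor_copy[of h]
  by (simp add: channel_def normalised_def is_normalisation_def dmn_def hom_def)

lemma channel_lunit: "channel C (lunit Y)"
  using lunit_naturality[of "disc Y"] by (simp add: channel_def disc_tensor disc_unit)

lemma channel_proj2: "channel C (proj2 X Y)"
proof -
  have "disc Y \<cdot> proj2 X Y = lunit \<I> \<cdot> (id \<I> \<otimes> disc Y) \<cdot> (disc X \<otimes> id Y)"
    using comp_eq_precomp[OF lunit_naturality[of "disc Y"], of "disc X \<otimes> id Y"] by simp
  also have "\<dots> = disc (X \<otimes>\<^sub>o Y)"
    using tensor_comp[of "disc X" "id \<I>" "id Y" "disc Y"] by (simp add: disc_tensor)
  finally show ?thesis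
    by (simp add: channel_def)
qed

lemma is_normalisation_proj2I:
  assumes g: "arr g" "dom g = X \<otimes>\<^sub>o Y" "cod g = Y"
    and copy_g: "copy Y \<cdot> g = (g \<otimes> id Y) \<cdot> assoc' X Y Y \<cdot> (id X \<otimes> copy Y)"
  shows "is_normalisation C g (proj2 X Y)"
proof -
  let ?p = "proj2 X Y"
  have "dmn C g \<otimes> ?p = (disc Y \<otimes> id Y) \<cdot> (g \<otimes> ?p)"
    using g tensor_comp[of g "disc Y" ?p "id Y"] by (simp add: dmn_def)
  also have "g \<otimes> ?p = (g \<otimes> id Y) \<cdot> (id (X \<otimes>\<^sub>o Y) \<otimes> ?p)"
    using g tensor_comp[of "id (X \<otimes>\<^sub>o Y)" g ?p "id Y"] by simp
  finally have "lunit Y \<cdot> (dmn C g \<otimes> ?p) \<cdot> copy (X \<otimes>\<^sub>o Y)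
      = lunit Y \<cdot> (disc Y \<otimes> id Y) \<cdot> (g \<otimes> id Y) \<cdot> (id (X \<otimes>\<^sub>o Y) \<otimes> ?p) \<cdot> copy (X \<otimes>\<^sub>o Y)"
    using g by simp
  also have "\<dots> = lunit Y \<cdot> (disc Y \<otimes> id Y) \<cdot> copy Y \<cdot> g"
    using g copy_g by (simp add: copy_tensor_proj2)
  also have "\<dots> = g"
    using g comp_eq_precomp[OF counit[of Y], of g] by simp
  finally show ?thesis
    using g by (simp add: is_normalisation_def hom_def)
qed

lemma copy_cmp_tensor_id:
  assumes cmp: "comparator_structure C cmp" and f: "arr f" "dom f = X" "cod f = Y"
  shows "copy Y \<cdot> cmp Y \<cdot> (f \<otimes> id Y) = ((cmp Y \<cdot> (f \<otimes> id Y)) \<otimes> id Y) \<cdot> assoc' X Y Y \<cdot> (id X \<otimes> copy Y)"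
proof -
  have cmp_typing: "arr (cmp Y)" "dom (cmp Y) = Y \<otimes>\<^sub>o Y" "cod (cmp Y) = Y"
    using cmp by (auto simp: comparator_structure_def hom_def)
  have frobenius: "(cmp Y \<otimes> id Y) \<cdot> assoc' Y Y Y \<cdot> (id Y \<otimes> copy Y) = copy Y \<cdot> cmp Y"
    using cmp by (simp add: comparator_structure_def)
  have "(id Y \<otimes> copy Y) \<cdot> (f \<otimes> id Y) = (f \<otimes> id (Y \<otimes>\<^sub>o Y)) \<cdot> (id X \<otimes> copy Y)"
    using f tensor_comp[of f "id Y" "id Y" "copy Y"] tensor_comp[of "id X" f "copy Y" "id (Y \<otimes>\<^sub>o Y)"]
    by simp
  then have "copy Y \<cdot> cmp Y \<cdot> (f \<otimes> id Y) = (cmp Y \<otimes> id Y) \<cdot> assoc' Y Y Y \<cdot> (f \<otimes> id (Y \<otimes>\<^sub>o Y)) \<cdot> (id X \<otimes> copy Y)"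
    using comp_eq_precomp[OF frobenius[symmetric], of "f \<otimes> id Y"] cmp_typing f by simp
  also have "\<dots> = (cmp Y \<otimes> id Y) \<cdot> ((f \<otimes> id Y) \<otimes> id Y) \<cdot> assoc' X Y Y \<cdot> (id X \<otimes> copy Y)"
    using comp_eq_precomp[OF assoc'_naturality[of f "id Y" "id Y"], of "id X \<otimes> copy Y"] f by simp
  also have "\<dots> = ((cmp Y \<cdot> (f \<otimes> id Y)) \<otimes> id Y) \<cdot> assoc' X Y Y \<cdot> (id X \<otimes> copy Y)"
    using comp_tensor_id[of "f \<otimes> id Y" "cmp Y" Y] cmp_typing f by simp
  finally show ?thesis .
qed

lemma nrm_eq_nrm_normalisation:
  assumes nrm: "normalisation_structure C nrm"
    and p: "is_normalisation C g p" and dmn_g: "nrm (dmn C g) = disc (dom g)"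
  shows "nrm g = nrm p"
proof -
  have nrm_normalisation: "\<And>h. arr h \<Longrightarrow> is_normalisation C h (nrm h)"
   and nrm_tensor: "\<And>a b. arr a \<Longrightarrow> arr b \<Longrightarrow> nrm (a \<otimes> b) = nrm a \<otimes> nrm b"
   and nrm_channel_comp: "\<And>h k A B D. h \<in> hom C A B \<Longrightarrow> k \<in> hom C B D \<Longrightarrow> channel C k \<Longrightarrow>
        nrm (k \<cdot> h) = k \<cdot> nrm h"
   and nrm_comp_copy: "\<And>h A B. h \<in> hom C (A \<otimes>\<^sub>o A) B \<Longrightarrow> nrm (h \<cdot> copy A) = nrm h \<cdot> copy A"
    using nrm unfolding normalisation_structure_def by blast+
  have g: "arr g" and p_typing: "arr p" "dom p = dom g" "cod p = cod g"
    and g_eq: "g = lunit (cod g) \<cdot> (dmn C g \<otimes> p) \<cdot> copy (dom g)"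
    using p by (auto simp: is_normalisation_def hom_def)
  have dmn_typing: "arr (dmn C g)" "dom (dmn C g) = dom g" "cod (dmn C g) = \<I>"
    using g by (simp_all add: dmn_def)
  have nrm_p: "arr (nrm p)" "dom (nrm p) = dom g" "cod (nrm p) = cod g"
    using nrm_normalisation[OF p_typing(1)] p_typing by (auto simp: is_normalisation_def hom_def)
  have "nrm g = lunit (cod g) \<cdot> nrm ((dmn C g \<otimes> p) \<cdot> copy (dom g))"
    using g_eq nrm_channel_comp[of "(dmn C g \<otimes> p) \<cdot> copy (dom g)" "dom g" "\<I> \<otimes>\<^sub>o cod g" "lunit (cod g)" "cod g"]
      channel_lunit dmn_typing p_typing
    by (simp add: hom_def)
  also have "\<dots> = lunit (cod g) \<cdot> (disc (dom g) \<otimes> nrm p) \<cdot> copy (dom g)"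
    using nrm_comp_copy[of "dmn C g \<otimes> p" "dom g" "\<I> \<otimes>\<^sub>o cod g"] nrm_tensor dmn_g dmn_typing p_typing
    by (simp add: hom_def)
  also have "\<dots> = nrm p"
    using lunit_disc_tensor_copy[OF nrm_p(1)] nrm_p by simp
  finally show ?thesis .
qed

lemma nrm_cmp_tensor_id:
  assumes nrm: "normalisation_structure C nrm" and cmp: "comparator_structure C cmp"
    and f: "arr f" "dom f = X" "cod f = Y" and full: "full_support C nrm cmp f"
  shows "nrm (cmp Y \<cdot> (f \<otimes> id Y)) = proj2 X Y"
proof -
  let ?g = "cmp Y \<cdot> (f \<otimes> id Y)"
  have cmp_typing: "arr (cmp Y)" "dom (cmp Y) = Y \<otimes>\<^sub>o Y" "cod (cmp Y) = Y"
    using cmp by (auto simp: comparator_structure_def hom_def)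
  have "is_normalisation C ?g (proj2 X Y)"
    using is_normalisation_proj2I copy_cmp_tensor_id[OF cmp f] cmp_typing f by simp
  moreover have "nrm (dmn C ?g) = disc (dom ?g)"
    using full cmp_typing f by (simp add: full_support_def cap_def dmn_def)
  ultimately have "nrm ?g = nrm (proj2 X Y)"
    by (rule nrm_eq_nrm_normalisation[OF nrm])
  also have "\<dots> = proj2 X Y"
    using nrm channel_normalised[OF channel_proj2] by (simp add: normalisation_structure_def)
  finally show ?thesis .
qed

end

theorem proposition4p3:
  fixes C :: "('o, 'm, 'z) cdcat_scheme"
    and nrm :: "'m \<Rightarrow> 'm"
    and cmp :: "'o \<Rightarrow> 'm"
  assumes "cd_category C"
    and "normalisation_structure C nrm"
    and "comparator_structure C cmp"
    and "cancellative C cmp"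
  shows "(\<forall>X \<omega>. \<omega> \<in> hom C (cUnit C) X \<and> full_support C nrm cmp \<omega> \<longrightarrow>
            nrm (cComp C (cmp X) (cTa C \<omega> (cId C X))) = cLU C X)
       \<and> (\<forall>X Y c. c \<in> hom C X Y \<and> channel C c \<and> full_support C nrm cmp c \<longrightarrow>
            nrm (cComp C (cmp Y) (cTa C c (cId C Y)))
            = cComp C (cLU C Y) (cTa C (cDisc C X) (cId C Y)))"
proof -
  interpret cd_category C
    by (fact assms(1))
  have nrm_cmp: "nrm (cmp Y \<cdot> (f \<otimes> id Y)) = proj2 X Y"
    if "f \<in> hom C X Y" "full_support C nrm cmp f" for f X Y
    using nrm_cmp_tensor_id[OF assms(2,3)] that by (simp add: hom_def)
  show ?thesis
  proof (intro conjI allI impI; elim conjE)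
    fix X \<omega>
    assume "\<omega> \<in> hom C \<I> X" "full_support C nrm cmp \<omega>"
    then show "nrm (cmp X \<cdot> (\<omega> \<otimes> id X)) = lunit X"
      using nrm_cmp by (simp add: disc_unit)
  next
    fix X Y c
    assume "c \<in> hom C X Y" "full_support C nrm cmp c"
    then show "nrm (cmp Y \<cdot> (c \<otimes> id Y)) = proj2 X Y"
      by (rule nrm_cmp)
  qed
qed

end
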